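(* There exist a transition system $\mathcal T$, an information source $\sigma_h$, and a dynamic heuristic $h$ over $\sigma_h$ that is dyn-admissible, dyn-consistent and dyn-monotonic (and whose information is only changed by update operations along transitions) such that some run of Dynamic A* with \texttt{reeval} set to false using $h$ reopens a state, i.e., removes a state from Closed. Moreover, in this run, omitting the reopening would cause the algorithm to return a suboptimal solution.
   Context: A transition system is $\mathcal T=\langle S,L,c,T,s_I,S_G\rangle$ with finite states $S$, finite labels $L$, cost function $c:L\to\mathbb R_{\ge0}$, transitions $T\subseteq S\times L\times S$, initial state $s_I$, goal states $S_G\subseteq S$; $h^*(s)$ is the minimal cost of a path from $s$ to a goal ($\infty$ if none). An information source $\sigma$ consists of a set $\mathcal I_\sigma$, $\iota_0^\sigma\in\mathcal I_\sigma$, $\mathrm{update}_\sigma:\mathcal I_\sigma\times T\to\mathcal I_\sigma$, $\mathrm{refine}_\sigma:\mathcal I_\sigma\times S\to\mathcal I_\sigma$. Reachable information: $\iota_n$ is reachable if obtained from $\iota_0^\sigma$ by a sequence of refine steps on states and update steps on transitions $e_1,\dots,e_n$, where each refined state and each origin of an updated transition is $s_I$ or the target of an earlier updated transition. A dynamic heuristic over $\sigma$ is $h:S\times\mathcal I_\sigma\to\mathbb R_{\ge0}\cup\{\infty\}$. It is dyn-admissible if $h(s,\iota)\le h^*(s)$; dyn-consistent if $h(s,\iota)\le c(\ell)+h(s',\iota)$ for all $\langle s,\ell,s'\rangle\in T$; each for all states and all reachable $\iota$; and dyn-monotonic if $h(s,\iota)\le h(s,\mathrm{update}_\sigma(\iota,t))$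 and $h(s,\iota)\le h(s,\mathrm{refine}_\sigma(\iota,s'))$ for all reachable $\iota$, all $s,s'\in S$, all $t\in T$. Parent source $\sigma_p$: $\mathcal I_{\sigma_p}$ = partial functions $S\rightharpoonup\mathbb R_{\ge0}\times(T\cup\{\bot\})$; $\iota_0=\{s_I\mapsto\langle0,\bot\rangle\}$; refine is the identity; $\mathrm{update}(\iota,\langle s,\ell,s'\rangle)$ with $\iota(s)=\langle g,\cdot\rangle$ changes only $s'$, setting it to $\langle g+c(\ell),\langle s,\ell,s'\rangle\rangle$ if $\iota(s')$ is undefined or has $g$-component $\ge g+c(\ell)$, otherwise unchanged. Dynamic A* takes $\mathcal T$, sources $\sigma_p,\sigma_h$, a dynamic heuristic $h$ over $\sigma_h$ and a Boolean flag \texttt{reeval}. Notation: at any moment $g(s)$ is the $g$-component of the current $\mathcal I(\sigma_p)(s)$ and $h(s)$ denotes $h(s,\mathcal I(\sigma_h))$ for the current $\mathcal I(\sigma_h)$. Open is a priority queue of entries $\langle s,g,h\rangle$ (duplicates allowed), popped by minimal stored value $g+h$ (ties arbitrary). Algorithm: 1. $\mathcal I(\sigma):=\iota_0^\sigma$ for both sources; $S_{\mathrm{known}}:=\{s_I\}$; Closed $:=\emptyset$; Open empty. If $h(s_I)<\infty$ insert $\langle s_I,g(s_I),h(s_I)\rangle$. 2. While Open is nonempty: pop an entry $\langle s,\hat g,\hat h\rangle$ of minimal $\hat g+\hat h$. If $s\in$ Closed, continue with the next iteration. Otherwise set $\mathcal I(\sigma):=\mathrm{refine}_\sigma(\mathcal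 I(\sigma),s)$ for both sources. If \texttt{reeval} is true and $\hat h<h(s)$: if $h(s)<\infty$ insert $\langle s,g(s),h(s)\rangle$; continue with the next iteration (this is a re-evaluation). Otherwise add $s$ to Closed ($s$ is expanded). If $s\in S_G$, return the path obtained by following the parent pointers of $\mathcal I(\sigma_p)$ from $s$ back to $s_I$. Otherwise, for each $t=\langle s,\ell,s'\rangle\in T$ in some order: let $old:=g(s')$ if $s'\in S_{\mathrm{known}}$ and undefined otherwise; set $\mathcal I(\sigma):=\mathrm{update}_\sigma(\mathcal I(\sigma),t)$ for both sources; add $s'$ to $S_{\mathrm{known}}$; if $h(s')=\infty$ skip $s'$; else if $old$ is undefined insert $\langle s',g(s'),h(s')\rangle$; else if $old>g(s')$, remove $s'$ from Closed if it is there (reopening) and insert $\langle s',g(s'),h(s')\rangle$. 3. Return "unsolvable". *)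

theory Defs
  imports Main "HOL-Library.Multiset" "HOL-Library.Extended_Nonnegative_Real"
begin

type_synonym ('s,'l) trans = "'s \<times> 'l \<times> 's"

record ('s,'l) tsys =
  St :: "'s set"
  Lb :: "'l set"
  cost :: "'l \<Rightarrow> real"
  Tr :: "('s,'l) trans set"
  sI :: 's
  SG :: "'s set"

definition wf_ts :: "('s,'l) tsys \<Rightarrow> bool" where
  "wf_ts T \<longleftrightarrow> finite (St T) \<and> finite (Lb T) \<and> (\<forall>l\<in>Lb T. cost T l \<ge> 0)
     \<and> Tr T \<subseteq> St T \<times> Lb T \<times> St T \<and> sI T \<in> St T \<and> SG T \<subseteq> St T"

inductive is_path :: "('s,'l) tsys \<Rightarrow> 's \<Rightarrow> ('s,'l) trans list \<Rightarrow> 's \<Rightarrow> bool"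
  for T where
  nil: "is_path T s [] s"
| cons: "(s,l,u) \<in> Tr T \<Longrightarrow> is_path T u ts s' \<Longrightarrow> is_path T s ((s,l,u) # ts) s'"

definition path_cost :: "('s,'l) tsys \<Rightarrow> ('s,'l) trans list \<Rightarrow> real" where
  "path_cost T ts = sum_list (map (\<lambda>(_,l,_). cost T l) ts)"

text \<open>h*(s): minimal cost of a path from s to a goal; infinity (Inf of empty set) if none.\<close>
definition hstar :: "('s,'l) tsys \<Rightarrow> 's \<Rightarrow> ennreal" where
  "hstar T s = (INF ts \<in> {ts. \<exists>s'. is_path T s ts s' \<and> s' \<in> SG T}. ennreal (path_cost T ts))"

record ('s,'l,'i) src =
  Info :: "'i set"
  iota0 :: 'i
  upd :: "'i \<Rightarrow> ('s,'l) trans \<Rightarrow> 'i"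
  refine :: "'i \<Rightarrow> 's \<Rightarrow> 'i"

definition wf_src :: "('s,'l) tsys \<Rightarrow> ('s,'l,'i) src \<Rightarrow> bool" where
  "wf_src T \<sigma> \<longleftrightarrow> iota0 \<sigma> \<in> Info \<sigma>
     \<and> (\<forall>\<iota>\<in>Info \<sigma>. \<forall>t\<in>Tr T. upd \<sigma> \<iota> t \<in> Info \<sigma>)
     \<and> (\<forall>\<iota>\<in>Info \<sigma>. \<forall>s\<in>St T. refine \<sigma> \<iota> s \<in> Info \<sigma>)"

text \<open>Reachable information: the set R records s_I and the targets of transitions updated so far.\<close>
inductive reach_aux :: "('s,'l) tsys \<Rightarrow> ('s,'l,'i) src \<Rightarrow> 'i \<Rightarrow> 's set \<Rightarrow> bool"
  for T \<sigma> where
  init: "reach_aux T \<sigma> (iota0 \<sigma>) {sI T}"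
| ref: "reach_aux T \<sigma> \<iota> R \<Longrightarrow> s \<in> R \<Longrightarrow> reach_aux T \<sigma> (refine \<sigma> \<iota> s) R"
| up: "reach_aux T \<sigma> \<iota> R \<Longrightarrow> (s,l,s') \<in> Tr T \<Longrightarrow> s \<in> R
        \<Longrightarrow> reach_aux T \<sigma> (upd \<sigma> \<iota> (s,l,s')) (insert s' R)"

definition reachable_info :: "('s,'l) tsys \<Rightarrow> ('s,'l,'i) src \<Rightarrow> 'i \<Rightarrow> bool" where
  "reachable_info T \<sigma> \<iota> \<longleftrightarrow> (\<exists>R. reach_aux T \<sigma> \<iota> R)"

definition dyn_admissible :: "('s,'l) tsys \<Rightarrow> ('s,'l,'i) src \<Rightarrow> ('s \<Rightarrow> 'i \<Rightarrow> ennreal) \<Rightarrow> bool" where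
  "dyn_admissible T \<sigma> h \<longleftrightarrow>
     (\<forall>\<iota> s. reachable_info T \<sigma> \<iota> \<longrightarrow> s \<in> St T \<longrightarrow> h s \<iota> \<le> hstar T s)"

definition dyn_consistent :: "('s,'l) tsys \<Rightarrow> ('s,'l,'i) src \<Rightarrow> ('s \<Rightarrow> 'i \<Rightarrow> ennreal) \<Rightarrow> bool" where
  "dyn_consistent T \<sigma> h \<longleftrightarrow>
     (\<forall>\<iota> s l s'. reachable_info T \<sigma> \<iota> \<longrightarrow> (s,l,s') \<in> Tr T \<longrightarrow> h s \<iota> \<le> ennreal (cost T l) + h s' \<iota>)"

definition dyn_monotonic :: "('s,'l) tsys \<Rightarrow> ('s,'l,'i) src \<Rightarrow> ('s \<Rightarrow> 'i \<Rightarrow> ennreal) \<Rightarrow> bool" where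
  "dyn_monotonic T \<sigma> h \<longleftrightarrow>
     (\<forall>\<iota>. reachable_info T \<sigma> \<iota> \<longrightarrow>
        (\<forall>s\<in>St T. (\<forall>t\<in>Tr T. h s \<iota> \<le> h s (upd \<sigma> \<iota> t))
                 \<and> (\<forall>s'\<in>St T. h s \<iota> \<le> h s (refine \<sigma> \<iota> s'))))"

type_synonym ('s,'l) pinfo = "'s \<Rightarrow> (real \<times> ('s,'l) trans option) option"

definition pupd :: "('s,'l) tsys \<Rightarrow> ('s,'l) pinfo \<Rightarrow> ('s,'l) trans \<Rightarrow> ('s,'l) pinfo" where
  "pupd T \<iota> t = (case t of (s,l,s') \<Rightarrow>
     (case \<iota> s of None \<Rightarrow> \<iota>
      | Some (g,_) \<Rightarrow>
          (case \<iota> s' of None \<Rightarrow> \<iota>(s' \<mapsto> (g + cost T l, Some t))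
           | Some (g',_) \<Rightarrow> if g' \<ge> g + cost T l then \<iota>(s' \<mapsto> (g + cost T l, Some t)) else \<iota>)))"

definition sigma_p :: "('s,'l) tsys \<Rightarrow> ('s,'l,('s,'l) pinfo) src" where
  "sigma_p T = \<lparr>Info = {\<iota>. dom \<iota> \<subseteq> St T \<and> (\<forall>s g p. \<iota> s = Some (g,p) \<longrightarrow> g \<ge> 0)},
                iota0 = [sI T \<mapsto> (0, None)], upd = pupd T, refine = (\<lambda>\<iota> s. \<iota>)\<rparr>"

definition gval :: "('s,'l) pinfo \<Rightarrow> 's \<Rightarrow> real" where
  "gval \<iota> s = fst (the (\<iota> s))"

inductive parent_path :: "('s,'l) tsys \<Rightarrow> ('s,'l) pinfo \<Rightarrow> 's \<Rightarrow> ('s,'l) trans list \<Rightarrow> bool"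
  for T \<iota> where
  base: "parent_path T \<iota> (sI T) []"
| step: "s' \<noteq> sI T \<Longrightarrow> \<iota> s' = Some (g, Some (s,l,s')) \<Longrightarrow> parent_path T \<iota> s ts
          \<Longrightarrow> parent_path T \<iota> s' (ts @ [(s,l,s')])"

datatype ('s,'l) status = Running | Solved "('s,'l) trans list" | Unsolvable

record ('s,'l,'i) cfg =
  pinf :: "('s,'l) pinfo"
  hinf :: 'i
  known :: "'s set"
  closed :: "'s set"
  opn :: "('s \<times> real \<times> ennreal) multiset"
  pending :: "('s,'l) trans set"  \<comment> \<open>successor transitions still to be processed, in arbitrary order\<close>
  status :: "('s,'l) status"

definition da_init :: "('s,'l) tsys \<Rightarrow> ('s,'l,'i) src \<Rightarrow> ('s \<Rightarrow> 'i \<Rightarrow> ennreal) \<Rightarrow> ('s,'l,'i) cfg" where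
  "da_init T \<sigma>h h = \<lparr>pinf = iota0 (sigma_p T), hinf = iota0 \<sigma>h, known = {sI T}, closed = {},
     opn = (if h (sI T) (iota0 \<sigma>h) < \<infinity> then {#(sI T, gval (iota0 (sigma_p T)) (sI T), h (sI T) (iota0 \<sigma>h))#} else {#}),
     pending = {}, status = Running\<rparr>"

definition is_min_entry :: "('s \<times> real \<times> ennreal) multiset \<Rightarrow> ('s \<times> real \<times> ennreal) \<Rightarrow> bool" where
  "is_min_entry M e \<longleftrightarrow> e \<in># M \<and>
     (\<forall>e'\<in>#M. ennreal (fst (snd e)) + snd (snd e) \<le> ennreal (fst (snd e')) + snd (snd e'))"

text \<open>The flag reopen = True is the algorithm as given; reopen = False is the variant that
  omits the reopening (removal from Closed); everything else is identical.\<close>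
inductive da_step :: "('s,'l) tsys \<Rightarrow> ('s,'l,'i) src \<Rightarrow> ('s \<Rightarrow> 'i \<Rightarrow> ennreal) \<Rightarrow> bool \<Rightarrow> bool
    \<Rightarrow> ('s,'l,'i) cfg \<Rightarrow> ('s,'l,'i) cfg \<Rightarrow> bool"
  for T \<sigma>h h reopen reeval where
  pop_closed:
    "status c = Running \<Longrightarrow> pending c = {} \<Longrightarrow> is_min_entry (opn c) (s, g0, h0) \<Longrightarrow> s \<in> closed c
     \<Longrightarrow> da_step T \<sigma>h h reopen reeval c (c\<lparr>opn := opn c - {#(s, g0, h0)#}\<rparr>)"
| pop_reeval:
    "status c = Running \<Longrightarrow> pending c = {} \<Longrightarrow> is_min_entry (opn c) (s, g0, h0) \<Longrightarrow> s \<notin> closed c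
     \<Longrightarrow> p' = refine (sigma_p T) (pinf c) s \<Longrightarrow> \<iota>' = refine \<sigma>h (hinf c) s
     \<Longrightarrow> reeval \<Longrightarrow> h0 < h s \<iota>'
     \<Longrightarrow> da_step T \<sigma>h h reopen reeval c
           (c\<lparr>pinf := p', hinf := \<iota>',
              opn := opn c - {#(s, g0, h0)#} + (if h s \<iota>' < \<infinity> then {#(s, gval p' s, h s \<iota>')#} else {#})\<rparr>)"
| pop_goal:
    "status c = Running \<Longrightarrow> pending c = {} \<Longrightarrow> is_min_entry (opn c) (s, g0, h0) \<Longrightarrow> s \<notin> closed c
     \<Longrightarrow> p' = refine (sigma_p T) (pinf c) s \<Longrightarrow> \<iota>' = refine \<sigma>h (hinf c) s
     \<Longrightarrow> \<not> (reeval \<and> h0 < h s \<iota>') \<Longrightarrow> s \<in> SG T \<Longrightarrow> parent_path T p' s ts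
     \<Longrightarrow> da_step T \<sigma>h h reopen reeval c
           (c\<lparr>pinf := p', hinf := \<iota>', opn := opn c - {#(s, g0, h0)#},
              closed := insert s (closed c), status := Solved ts\<rparr>)"
| pop_expand:
    "status c = Running \<Longrightarrow> pending c = {} \<Longrightarrow> is_min_entry (opn c) (s, g0, h0) \<Longrightarrow> s \<notin> closed c
     \<Longrightarrow> p' = refine (sigma_p T) (pinf c) s \<Longrightarrow> \<iota>' = refine \<sigma>h (hinf c) s
     \<Longrightarrow> \<not> (reeval \<and> h0 < h s \<iota>') \<Longrightarrow> s \<notin> SG T
     \<Longrightarrow> da_step T \<sigma>h h reopen reeval c
           (c\<lparr>pinf := p', hinf := \<iota>', opn := opn c - {#(s, g0, h0)#},
              closed := insert s (closed c), pending := {t \<in> Tr T. fst t = s}\<rparr>)"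
| exhausted:
    "status c = Running \<Longrightarrow> pending c = {} \<Longrightarrow> opn c = {#}
     \<Longrightarrow> da_step T \<sigma>h h reopen reeval c (c\<lparr>status := Unsolvable\<rparr>)"
| successor:
    "status c = Running \<Longrightarrow> (s, l, s') \<in> pending c
     \<Longrightarrow> p' = upd (sigma_p T) (pinf c) (s, l, s') \<Longrightarrow> \<iota>' = upd \<sigma>h (hinf c) (s, l, s')
     \<Longrightarrow> improved = (s' \<in> known c \<and> h s' \<iota>' \<noteq> \<infinity> \<and> gval (pinf c) s' > gval p' s')
     \<Longrightarrow> ins = (h s' \<iota>' \<noteq> \<infinity> \<and> (s' \<notin> known c \<or> improved))
     \<Longrightarrow> da_step T \<sigma>h h reopen reeval c
           (c\<lparr>pinf := p', hinf := \<iota>', known := insert s' (known c),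
              pending := pending c - {(s, l, s')},
              closed := (if improved \<and> reopen then closed c - {s'} else closed c),
              opn := opn c + (if ins then {#(s', gval p' s', h s' \<iota>')#} else {#})\<rparr>)"

end

theory Submission
  imports Defs
begin

text \<open>
  The heuristic is 0 until the cheap transition 0 \<rightarrow> 1 has been generated and is the perfect
  heuristic h* afterwards. Without re-evaluation, Open keeps the stale value 0 for the states 2
  and 4, which were generated through the expensive transitions out of 0, so both are expanded
  before 1 (whose entry already carries h = 11). Expanding 1 then finds the cheaper path to 2,
  which is already closed and must be reopened. Omitting the reopening leaves g(3) = 13, found
  through 4, and the search returns a path of cost 13 although h*(0) = 12.
\<close>

lemma hstar_le_path_cost:
  assumes "is_path T s ts s'" and "s' \<in> SG T"
  shows "hstar T s \<le> ennreal (path_cost T ts)"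
  unfolding hstar_def by (rule INF_lower) (use assms in blast)

lemma potential_le_path_cost:
  assumes "is_path T s ts s'" and "s' \<in> SG T"
    and consistent: "\<And>x l y. (x, l, y) \<in> Tr T \<Longrightarrow> p x \<le> cost T l + p y"
    and goal: "\<And>x. x \<in> SG T \<Longrightarrow> p x \<le> 0"
  shows "p s \<le> path_cost T ts"
  using assms(1,2)
proof (induction rule: is_path.induct)
  case (nil s)
  then show ?case by (simp add: goal path_cost_def)
next
  case (cons s l u ts s')
  then have "p u \<le> path_cost T ts" by simp
  with consistent[OF cons.hyps(1)] show ?case by (simp add: path_cost_def)
qed

lemma potential_le_hstar:
  assumes "\<And>x l y. (x, l, y) \<in> Tr T \<Longrightarrow> p x \<le> cost T l + p y"
    and "\<And>x. x \<in> SG T \<Longrightarrow> p x \<le> 0"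
  shows "ennreal (p s) \<le> hstar T s"
  unfolding hstar_def
proof (rule INF_greatest)
  fix ts assume "ts \<in> {ts. \<exists>s'. is_path T s ts s' \<and> s' \<in> SG T}"
  then show "ennreal (p s) \<le> ennreal (path_cost T ts)"
    using potential_le_path_cost[where p=p, OF _ _ assms] ennreal_leI by blast
qed

lemma da_step_Running: "da_step T \<sigma>h h reopen reeval c c' \<Longrightarrow> status c = Running"
  by (erule da_step.cases) auto

lemma da_step_to:
  "da_step T \<sigma>h h reopen reeval c c' \<Longrightarrow> c' = c'' \<Longrightarrow> da_step T \<sigma>h h reopen reeval c c''"
  by simp

definition example_ts :: "(nat, nat) tsys" where
  "example_ts = \<lparr>St = {0, 1, 2, 3, 4}, Lb = {1, 3, 10}, cost = real,
     Tr = {(0, 3, 2), (0, 1, 1), (0, 3, 4), (1, 1, 2), (2, 10, 3), (4, 10, 3)}, sI = 0, SG = {3}\<rparr>"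

lemma example_ts_simps [simp]:
  "sI example_ts = 0" "SG example_ts = {3}"
  by (simp_all add: example_ts_def)

definition history_src :: "(nat, nat, (nat \<times> nat \<times> nat) list) src" where
  "history_src = \<lparr>Info = UNIV, iota0 = [], upd = (\<lambda>\<iota> t. t # \<iota>), refine = (\<lambda>\<iota> s. \<iota>)\<rparr>"

definition perfect_h :: "nat \<Rightarrow> real" where
  "perfect_h s = (if s = 0 then 12 else if s = 1 then 11 else if s = 2 \<or> s = 4 then 10 else 0)"

definition example_h :: "nat \<Rightarrow> (nat \<times> nat \<times> nat) list \<Rightarrow> ennreal" where
  "example_h s \<iota> = (if (0, 1, 1) \<in> set \<iota> then ennreal (perfect_h s) else 0)"

lemma perfect_h_consistent:
  "(s, l, u) \<in> Tr example_ts \<Longrightarrow> perfect_h s \<le> cost example_ts l + perfect_h u"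
  by (auto simp: example_ts_def perfect_h_def)

lemma example_wf: "wf_ts example_ts" "wf_src example_ts history_src"
  by (auto simp: wf_ts_def example_ts_def wf_src_def history_src_def)

lemma example_h_admissible: "dyn_admissible example_ts history_src example_h"
proof -
  have "ennreal (perfect_h s) \<le> hstar example_ts s" for s
    by (rule potential_le_hstar[OF perfect_h_consistent]) (auto simp: example_ts_def perfect_h_def)
  then show ?thesis by (simp add: dyn_admissible_def example_h_def)
qed

lemma example_h_consistent: "dyn_consistent example_ts history_src example_h"
  unfolding dyn_consistent_def
proof (intro allI impI)
  fix \<iota> s l u assume t: "(s, l, u) \<in> Tr example_ts"
  have "cost example_ts l \<ge> 0" "perfect_h u \<ge> 0"
    using t by (auto simp: example_ts_def perfect_h_def)
  with perfect_h_consistent[OF t]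
  have "ennreal (perfect_h s) \<le> ennreal (cost example_ts l) + ennreal (perfect_h u)"
    by (simp add: ennreal_plus[symmetric] del: ennreal_plus)
  then show "example_h s \<iota> \<le> ennreal (cost example_ts l) + example_h u \<iota>"
    by (simp add: example_h_def)
qed

lemma example_h_monotonic: "dyn_monotonic example_ts history_src example_h"
  unfolding dyn_monotonic_def by (auto simp: example_h_def history_src_def)

lemma hstar_example_initial: "hstar example_ts (sI example_ts) \<le> 12"
proof -
  have "is_path example_ts 0 [(0, 1, 1), (1, 1, 2), (2, 10, 3)] 3"
    by (auto simp: example_ts_def intro!: is_path.intros)
  then have "hstar example_ts 0 \<le> ennreal (path_cost example_ts [(0, 1, 1), (1, 1, 2), (2, 10, 3)])"
    by (rule hstar_le_path_cost) (simp add: example_ts_def)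
  then show ?thesis by (simp add: path_cost_def example_ts_def)
qed

abbreviation astar_step where
  "astar_step \<equiv> da_step example_ts history_src example_h True False"

abbreviation astar_step_no_reopen where
  "astar_step_no_reopen \<equiv> da_step example_ts history_src example_h False False"

definition par0 :: "(nat, nat) pinfo" where "par0 = [0 \<mapsto> (0, None)]"
definition "par1 = par0(2 \<mapsto> (3, Some (0, 3, 2)))"
definition "par2 = par1(4 \<mapsto> (3, Some (0, 3, 4)))"
definition "par3 = par2(1 \<mapsto> (1, Some (0, 1, 1)))"
definition "par4 = par3(3 \<mapsto> (13, Some (2, 10, 3)))"
definition "par5 = par4(3 \<mapsto> (13, Some (4, 10, 3)))"
definition "par6 = par5(2 \<mapsto> (2, Some (1, 1, 2)))"

type_synonym example_cfg = "(nat, nat, (nat \<times> nat \<times> nat) list) cfg"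

definition cfg1 :: example_cfg where
  "cfg1 = \<lparr>pinf = par0, hinf = [], known = {0}, closed = {0}, opn = {#},
     pending = {(0, 3, 2), (0, 1, 1), (0, 3, 4)}, status = Running\<rparr>"
definition cfg2 :: example_cfg where
  "cfg2 = \<lparr>pinf = par1, hinf = [(0, 3, 2)], known = {0, 2}, closed = {0}, opn = {#(2, 3, 0)#},
     pending = {(0, 1, 1), (0, 3, 4)}, status = Running\<rparr>"
definition cfg3 :: example_cfg where
  "cfg3 = \<lparr>pinf = par2, hinf = [(0, 3, 4), (0, 3, 2)], known = {0, 2, 4}, closed = {0},
     opn = {#(4, 3, 0), (2, 3, 0)#}, pending = {(0, 1, 1)}, status = Running\<rparr>"
definition cfg4 :: example_cfg where
  "cfg4 = \<lparr>pinf = par3, hinf = [(0, 1, 1), (0, 3, 4), (0, 3, 2)], known = {0, 1, 2, 4}, closed = {0},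
     opn = {#(1, 1, 11), (4, 3, 0), (2, 3, 0)#}, pending = {}, status = Running\<rparr>"
definition cfg5 :: example_cfg where
  "cfg5 = \<lparr>pinf = par3, hinf = [(0, 1, 1), (0, 3, 4), (0, 3, 2)], known = {0, 1, 2, 4}, closed = {0, 2},
     opn = {#(1, 1, 11), (4, 3, 0)#}, pending = {(2, 10, 3)}, status = Running\<rparr>"
definition cfg6 :: example_cfg where
  "cfg6 = \<lparr>pinf = par4, hinf = [(2, 10, 3), (0, 1, 1), (0, 3, 4), (0, 3, 2)], known = {0, 1, 2, 3, 4},
     closed = {0, 2}, opn = {#(3, 13, 0), (1, 1, 11), (4, 3, 0)#}, pending = {}, status = Running\<rparr>"
definition cfg7 :: example_cfg where
  "cfg7 = \<lparr>pinf = par4, hinf = [(2, 10, 3), (0, 1, 1), (0, 3, 4), (0, 3, 2)], known = {0, 1, 2, 3, 4},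
     closed = {0, 2, 4}, opn = {#(3, 13, 0), (1, 1, 11)#}, pending = {(4, 10, 3)}, status = Running\<rparr>"
definition cfg8 :: example_cfg where
  "cfg8 = \<lparr>pinf = par5, hinf = [(4, 10, 3), (2, 10, 3), (0, 1, 1), (0, 3, 4), (0, 3, 2)],
     known = {0, 1, 2, 3, 4}, closed = {0, 2, 4}, opn = {#(3, 13, 0), (1, 1, 11)#}, pending = {},
     status = Running\<rparr>"
definition cfg9 :: example_cfg where
  "cfg9 = \<lparr>pinf = par5, hinf = [(4, 10, 3), (2, 10, 3), (0, 1, 1), (0, 3, 4), (0, 3, 2)],
     known = {0, 1, 2, 3, 4}, closed = {0, 1, 2, 4}, opn = {#(3, 13, 0)#}, pending = {(1, 1, 2)},
     status = Running\<rparr>"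
definition cfg10 :: example_cfg where
  "cfg10 = \<lparr>pinf = par6, hinf = [(1, 1, 2), (4, 10, 3), (2, 10, 3), (0, 1, 1), (0, 3, 4), (0, 3, 2)],
     known = {0, 1, 2, 3, 4}, closed = {0, 1, 4}, opn = {#(2, 2, 10), (3, 13, 0)#}, pending = {},
     status = Running\<rparr>"

definition cfg10_no_reopen :: example_cfg where "cfg10_no_reopen = cfg10\<lparr>closed := {0, 1, 2, 4}\<rparr>"
definition cfg11_no_reopen :: example_cfg where
  "cfg11_no_reopen = cfg10_no_reopen\<lparr>opn := {#(3, 13, 0)#}\<rparr>"

lemmas run_defs = example_ts_def history_src_def example_h_def perfect_h_def
  par0_def par1_def par2_def par3_def par4_def par5_def par6_def
  cfg1_def cfg2_def cfg3_def cfg4_def cfg5_def cfg6_def cfg7_def cfg8_def cfg9_def cfg10_def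
  cfg10_no_reopen_def cfg11_no_reopen_def
  da_init_def sigma_p_def is_min_entry_def gval_def pupd_def

lemma run_steps:
  "astar_step (da_init example_ts history_src example_h) cfg1"
  "astar_step cfg1 cfg2" "astar_step cfg2 cfg3" "astar_step cfg3 cfg4" "astar_step cfg4 cfg5"
  "astar_step cfg5 cfg6" "astar_step cfg6 cfg7" "astar_step cfg7 cfg8" "astar_step cfg8 cfg9"
  "astar_step cfg9 cfg10" "astar_step_no_reopen cfg9 cfg10_no_reopen"
  subgoal by (rule da_step_to[OF da_step.pop_expand[where s=0 and ?g0.0=0 and ?h0.0=0, OF _ _ _ _ refl refl]])
      (auto simp: run_defs)
  subgoal by (rule da_step_to[OF da_step.successor[where s=0 and l=3 and s'=2, OF _ _ refl refl refl refl]])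
      (auto simp: run_defs)
  subgoal by (rule da_step_to[OF da_step.successor[where s=0 and l=3 and s'=4, OF _ _ refl refl refl refl]])
      (auto simp: run_defs)
  subgoal by (rule da_step_to[OF da_step.successor[where s=0 and l=1 and s'=1, OF _ _ refl refl refl refl]])
      (auto simp: run_defs)
  subgoal by (rule da_step_to[OF da_step.pop_expand[where s=2 and ?g0.0=3 and ?h0.0=0, OF _ _ _ _ refl refl]])
      (auto simp: run_defs)
  subgoal by (rule da_step_to[OF da_step.successor[where s=2 and l=10 and s'=3, OF _ _ refl refl refl refl]])
      (auto simp: run_defs)
  subgoal by (rule da_step_to[OF da_step.pop_expand[where s=4 and ?g0.0=3 and ?h0.0=0, OF _ _ _ _ refl refl]])
      (auto simp: run_defs)
  subgoal by (rule da_step_to[OF da_step.successor[where s=4 and l=10 and s'=3, OF _ _ refl refl refl refl]])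
      (auto simp: run_defs)
  subgoal by (rule da_step_to[OF da_step.pop_expand[where s=1 and ?g0.0=1 and ?h0.0=11, OF _ _ _ _ refl refl]])
      (auto simp: run_defs)
  subgoal by (rule da_step_to[OF da_step.successor[where s=1 and l=1 and s'=2, OF _ _ refl refl refl refl]])
      (auto simp: run_defs)
  subgoal by (rule da_step_to[OF da_step.successor[where s=1 and l=1 and s'=2, OF _ _ refl refl refl refl]])
      (auto simp: run_defs)
  done

lemma run_prefix_closed_grows:
  "(\<lambda>a b. astar_step a b \<and> closed a \<subseteq> closed b)\<^sup>*\<^sup>* (da_init example_ts history_src example_h) cfg9"
proof -
  have closed_grows: "closed (da_init example_ts history_src example_h) \<subseteq> closed cfg1"
    "closed cfg1 \<subseteq> closed cfg2" "closed cfg2 \<subseteq> closed cfg3" "closed cfg3 \<subseteq> closed cfg4"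
    "closed cfg4 \<subseteq> closed cfg5" "closed cfg5 \<subseteq> closed cfg6" "closed cfg6 \<subseteq> closed cfg7"
    "closed cfg7 \<subseteq> closed cfg8" "closed cfg8 \<subseteq> closed cfg9"
    by (auto simp: run_defs)
  show ?thesis
    by (rule converse_rtranclp_into_rtranclp, use run_steps closed_grows in blast)+ simp
qed

abbreviation path_via_4 :: "(nat, nat) trans list" where
  "path_via_4 \<equiv> [(0, 3, 4), (4, 10, 3)]"

lemma parent_path_par6_goal: "parent_path example_ts par6 3 ts \<longleftrightarrow> ts = path_via_4"
proof -
  have par6: "par6 0 = Some (0, None)" "par6 4 = Some (3, Some (0, 3, 4))"
    "par6 3 = Some (13, Some (4, 10, 3))"
    by (simp_all add: par0_def par1_def par2_def par3_def par4_def par5_def par6_def)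
  have "parent_path example_ts par6 0 ts \<longleftrightarrow> ts = []" for ts
    by (subst parent_path.simps) (simp add: example_ts_def)
  then have "parent_path example_ts par6 4 ts \<longleftrightarrow> ts = [(0, 3, 4)]" for ts
    by (subst parent_path.simps) (auto simp: example_ts_def par6)
  then show ?thesis
    by (subst parent_path.simps) (auto simp: example_ts_def par6)
qed

text \<open>Without reopening, the entry of state 2 is discarded as closed and the goal 3 is
  expanded next, with the parent pointers still leading through 4.\<close>

lemmas cfg_no_reopen_defs = cfg10_no_reopen_def cfg11_no_reopen_def cfg10_def
  history_src_def sigma_p_def is_min_entry_def

lemma no_reopen_run_from_cfg10:
  "astar_step_no_reopen cfg10_no_reopen c \<longleftrightarrow> c = cfg11_no_reopen"
proof
  show "astar_step_no_reopen cfg10_no_reopen c \<Longrightarrow> c = cfg11_no_reopen"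
    by (erule da_step.cases) (auto simp: cfg_no_reopen_defs)
  show "c = cfg11_no_reopen \<Longrightarrow> astar_step_no_reopen cfg10_no_reopen c"
    by (rule da_step_to[OF da_step.pop_closed[where s=2 and ?g0.0=2 and ?h0.0=10]])
      (auto simp: cfg_no_reopen_defs)
qed

lemma no_reopen_run_from_cfg11:
  "astar_step_no_reopen cfg11_no_reopen c
    \<Longrightarrow> status c \<noteq> Running \<and> (\<forall>ts. status c = Solved ts \<longrightarrow> ts = path_via_4)"
  by (erule da_step.cases) (auto simp: cfg_no_reopen_defs parent_path_par6_goal)

lemma no_reopen_run_solves:
  "\<exists>c ts. astar_step_no_reopen\<^sup>*\<^sup>* cfg10_no_reopen c \<and> status c = Solved ts"
proof -
  let ?solved = "cfg11_no_reopen\<lparr>closed := insert 3 (closed cfg11_no_reopen), opn := {#},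
    status := Solved path_via_4\<rparr>"
  have "astar_step_no_reopen cfg11_no_reopen ?solved"
    by (rule da_step_to[OF da_step.pop_goal[where s=3 and ?g0.0=13 and ?h0.0=0, OF _ _ _ _ refl refl]])
      (auto simp: cfg_no_reopen_defs parent_path_par6_goal)
  moreover have "astar_step_no_reopen cfg10_no_reopen cfg11_no_reopen"
    using no_reopen_run_from_cfg10 by simp
  ultimately have "astar_step_no_reopen\<^sup>*\<^sup>* cfg10_no_reopen ?solved"
    by (meson r_into_rtranclp rtranclp.rtrancl_into_rtrancl)
  then show ?thesis by auto
qed

lemma no_reopen_run_solutions:
  assumes "astar_step_no_reopen\<^sup>*\<^sup>* cfg10_no_reopen c" and "status c = Solved ts"
  shows "ts = path_via_4"
proof -
  from assms(1)
  have "c = cfg10_no_reopen \<or> c = cfg11_no_reopen \<or>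
      (status c \<noteq> Running \<and> (\<forall>ts. status c = Solved ts \<longrightarrow> ts = path_via_4))"
    by induction (use no_reopen_run_from_cfg10 no_reopen_run_from_cfg11 da_step_Running in blast)+
  with assms(2) show ?thesis by (auto simp: cfg_no_reopen_defs)
qed

theorem mainTheorem14:
  shows "\<exists>(T :: (nat, nat) tsys) (\<sigma>h :: (nat, nat, (nat \<times> nat \<times> nat) list) src)
           (h :: nat \<Rightarrow> (nat \<times> nat \<times> nat) list \<Rightarrow> ennreal).
     wf_ts T \<and> wf_src T \<sigma>h \<and> (\<forall>\<iota> s. refine \<sigma>h \<iota> s = \<iota>) \<and>
     dyn_admissible T \<sigma>h h \<and> dyn_consistent T \<sigma>h h \<and> dyn_monotonic T \<sigma>h h \<and>
     (\<exists>c c1.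
        (\<lambda>a b. da_step T \<sigma>h h True False a b \<and> closed a \<subseteq> closed b)\<^sup>*\<^sup>* (da_init T \<sigma>h h) c \<and>
        da_step T \<sigma>h h True False c c1 \<and> \<not> closed c \<subseteq> closed c1 \<and>
        da_step T \<sigma>h h False False c (c1\<lparr>closed := closed c\<rparr>) \<and>
        (\<exists>c2 ts. (da_step T \<sigma>h h False False)\<^sup>*\<^sup>* (c1\<lparr>closed := closed c\<rparr>) c2 \<and> status c2 = Solved ts) \<and>
        (\<forall>c2 ts. (da_step T \<sigma>h h False False)\<^sup>*\<^sup>* (c1\<lparr>closed := closed c\<rparr>) c2 \<and> status c2 = Solved ts
           \<longrightarrow> hstar T (sI T) < ennreal (path_cost T ts)))"
proof -
  have reopens: "\<not> closed cfg9 \<subseteq> closed cfg10" by (simp add: cfg9_def cfg10_def)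
  have no_reopen_branch: "cfg10\<lparr>closed := closed cfg9\<rparr> = cfg10_no_reopen"
    by (simp add: cfg9_def cfg10_no_reopen_def)
  have suboptimal: "hstar example_ts (sI example_ts) < ennreal (path_cost example_ts path_via_4)"
    using hstar_example_initial by (rule le_less_trans) (simp add: path_cost_def example_ts_def)
  show ?thesis
    apply (rule exI[of _ example_ts], rule exI[of _ history_src], rule exI[of _ example_h])
    apply (intro conjI example_wf example_h_admissible example_h_consistent example_h_monotonic)
     apply (simp add: history_src_def)
    apply (rule exI[of _ cfg9], rule exI[of _ cfg10], unfold no_reopen_branch)
    apply (intro conjI run_prefix_closed_grows run_steps(10,11) reopens no_reopen_run_solves)
    using no_reopen_run_solutions suboptimal by blast
qed

end
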